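(* Let $m,n,d,\boldsymbol\alpha,\boldsymbol\beta$ be as in the context, $t_0>1$, and let $\psi:[t_0,\infty)\to(0,\infty)$ be continuous and decreasing with $\frac{1}{2t}\le\psi(t)<\frac1t$ for all $t\ge t_0$, and such that there exist $C_\psi\ge1$, $\eta\in(0,1)$ with $F_\psi(t_2)\le C_\psi F_\psi(t_1)$ whenever $t_0\le t_1\le t_2\le t_1e^{(\log t_1)^\eta}$, where $F_\psi(t)=1-t\psi(t)$. Set $s_0=\frac md\log t_0-\frac nd\log\psi(t_0)$. Define $r:[s_0,\infty)\to\mathbb R$ by: for $s\ge s_0$ let $t=t(s)\ge t_0$ be the unique solution of $s=\frac md\log t-\frac nd\log\psi(t)$, and put $r(s)=-\frac1d\log(t\psi(t))$. Then $r$ is continuous with values in $(0,\frac1d)$, and: (a) there is $C_r\ge1$ and $s_*$ such that $r(s_2)\le C_r r(s_1)$ whenever $s_*\le s_1\le s_2\le s_1+s_1^\eta$; (b) for all fixed $\alpha,\beta>0$, $\sum_{k\ge t_0}k^{-1}F_\psi(k)^\alpha\log^\beta(1/F_\psi(k))=\infty$ if and only if $\sum_{k\ge s_0}r(k)^\alpha\log^\beta(1/r(k))=\infty$ (sums over integers); (c) for any $A\in M_{m,n}(\mathbb R/\mathbb Z)$: if $\Delta(g_s\Lambda_A)>\omega_1 r(s)$ for all sufficiently large $s$, then $A$ is $\psi_{\boldsymbol\alpha,\boldsymbol\beta}$-Dirichlet; and if $\Delta(g_s\Lambda_A)\le\omega_2r(s)$ for an unbounded set of $s$, then $A$ is not 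$\psi_{\boldsymbol\alpha,\boldsymbol\beta}$-Dirichlet.
   Context: $d=m+n$; weight vectors $\boldsymbol\alpha\in(\mathbb R_{>0})^m$, $\boldsymbol\beta\in(\mathbb R_{>0})^n$ with coordinates summing to 1. $\omega_1=\max\{m\alpha_i,n\beta_j\}$, $\omega_2=\min\{m\alpha_i,n\beta_j\}$ over $1\le i\le m,1\le j\le n$. $g_s=\mathrm{diag}(e^{\alpha_1s},\dots,e^{\alpha_ms},e^{-\beta_1s},\dots,e^{-\beta_ns})$; $\Lambda_A=\begin{pmatrix}I_m&A\\0&I_n\end{pmatrix}\mathbb Z^d$. For a unimodular lattice $\Lambda\subset\mathbb R^d$, $\Delta(\Lambda)=\sup_{\mathbf v\in\Lambda\setminus\{0\}}\log(1/\|\mathbf v\|)$ with $\|\cdot\|$ the sup norm. Quasi-norms $\|\mathbf x\|_{\boldsymbol\alpha}=\max_i|x_i|^{1/\alpha_i}$, $\|\mathbf y\|_{\boldsymbol\beta}=\max_j|y_j|^{1/\beta_j}$; $A$ is $\psi_{\boldsymbol\alpha,\boldsymbol\beta}$-Dirichlet if for all sufficiently large $t$ there are $\mathbf p\in\mathbb Z^m$, $\mathbf q\in\mathbb Z^n\setminus\{0\}$ with $\|A\mathbf q-\mathbf p\|_{\boldsymbol\alpha}<\psi(t)$, $\|\mathbf q\|_{\boldsymbol\beta}<t$ (a property of $A$ mod $M_{m,n}(\mathbb Z)$). *)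

theory Defs
  imports "HOL-Analysis.Analysis"
begin

text \<open>We model R^d = R^m x R^n as pairs of vectors of types real^'m and real^'n,
  with m = CARD('m), n = CARD('n). Matrices A in M_{m,n}(R) are real^'n^'m.\<close>


definition integer_vectors :: "(real^'a::finite) set" where
  "integer_vectors = {v. \<forall>i. v $ i \<in> \<int>}"

definition supnorm :: "(real^'m::finite) \<times> (real^'n::finite) \<Rightarrow> real" where
  "supnorm v = max (Max (range (\<lambda>i. \<bar>fst v $ i\<bar>))) (Max (range (\<lambda>j. \<bar>snd v $ j\<bar>)))"

definition Delta :: "((real^'m::finite) \<times> (real^'n::finite)) set \<Rightarrow> real" where
  "Delta L = (SUP v \<in> L - {0}. ln (1 / supnorm v))"

text \<open>Lambda_A = [[I_m, A],[0, I_n]] Z^d.\<close>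
definition Lambda :: "real^'n::finite^'m::finite \<Rightarrow> ((real^'m) \<times> (real^'n)) set" where
  "Lambda A = {(p + A *v q, q) | p q. p \<in> integer_vectors \<and> q \<in> integer_vectors}"

definition gflow :: "real^'m::finite \<Rightarrow> real^'n::finite \<Rightarrow> real
    \<Rightarrow> (real^'m) \<times> (real^'n) \<Rightarrow> (real^'m) \<times> (real^'n)" where
  "gflow \<alpha> \<beta> s v = ((\<chi> i. exp (\<alpha> $ i * s) * fst v $ i), (\<chi> j. exp (- \<beta> $ j * s) * snd v $ j))"

definition qnorm :: "real^'a::finite \<Rightarrow> real^'a \<Rightarrow> real" where
  "qnorm w x = Max (range (\<lambda>i. \<bar>x $ i\<bar> powr (1 / w $ i)))"

definition psi_Dirichlet :: "real^'m::finite \<Rightarrow> real^'n::finite \<Rightarrow> (real \<Rightarrow> real)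
    \<Rightarrow> real^'n^'m \<Rightarrow> bool" where
  "psi_Dirichlet \<alpha> \<beta> \<psi> A \<longleftrightarrow>
     (\<forall>\<^sub>F t in at_top. \<exists>p q. p \<in> integer_vectors \<and> q \<in> integer_vectors \<and> q \<noteq> 0 \<and>
        qnorm \<alpha> (A *v q - p) < \<psi> t \<and> qnorm \<beta> q < t)"

definition omega1 :: "real^'m::finite \<Rightarrow> real^'n::finite \<Rightarrow> real" where
  "omega1 \<alpha> \<beta> = Max ((\<lambda>i. real CARD('m) * \<alpha> $ i) ` UNIV \<union> (\<lambda>j. real CARD('n) * \<beta> $ j) ` UNIV)"

definition omega2 :: "real^'m::finite \<Rightarrow> real^'n::finite \<Rightarrow> real" where
  "omega2 \<alpha> \<beta> = Min ((\<lambda>i. real CARD('m) * \<alpha> $ i) ` UNIV \<union> (\<lambda>j. real CARD('n) * \<beta> $ j) ` UNIV)"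

definition Fpsi :: "(real \<Rightarrow> real) \<Rightarrow> real \<Rightarrow> real" where
  "Fpsi \<psi> t = 1 - t * \<psi> t"

definition s_of :: "nat \<Rightarrow> nat \<Rightarrow> (real \<Rightarrow> real) \<Rightarrow> real \<Rightarrow> real" where
  "s_of m n \<psi> t = real m / real (m + n) * ln t - real n / real (m + n) * ln (\<psi> t)"

definition t_of :: "nat \<Rightarrow> nat \<Rightarrow> (real \<Rightarrow> real) \<Rightarrow> real \<Rightarrow> real \<Rightarrow> real" where
  "t_of m n \<psi> t0 s = (THE t. t0 \<le> t \<and> s = s_of m n \<psi> t)"

definition r_fun :: "nat \<Rightarrow> nat \<Rightarrow> (real \<Rightarrow> real) \<Rightarrow> real \<Rightarrow> real \<Rightarrow> real" where
  "r_fun m n \<psi> t0 s = - (1 / real (m + n)) * ln (t_of m n \<psi> t0 s * \<psi> (t_of m n \<psi> t0 s))"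

end

theory Submission
  imports Defs
begin

text \<open>Let \<open>T\<close> invert \<open>s(t) = (m/d) ln t - (n/d) ln \<psi>(t)\<close> and put \<open>R(t) = -(1/d) ln (t \<psi>(t))\<close>, so that
  \<open>r = R \<circ> T\<close>. Then \<open>s = ln t + n R(t)\<close>, \<open>\<psi>(t) = exp (- s - m R(t))\<close>, \<open>t = exp (s - n R(t))\<close>, and
  \<open>F \<le> d R \<le> 2 F\<close> because \<open>t \<psi>(t) = 1 - F(t)\<close> with \<open>F \<le> 1/2\<close>.

  Part (c) is Dani's correspondence: a nonzero vector of \<open>g\<^sub>s \<Lambda>\<^sub>A\<close> of sup norm below \<open>exp (- \<omega> R)\<close> is,
  component by component, a solution of \<open>\<parallel>Aq - p\<parallel>\<^sub>\<alpha> < \<psi>(t)\<close>, \<open>\<parallel>q\<parallel>\<^sub>\<beta> < t\<close>; the weights \<open>\<omega>\<^sub>1\<close>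
  and \<open>\<omega>\<^sub>2\<close> compare \<open>\<omega> R\<close> with \<open>m \<alpha>\<^sub>i R\<close> and \<open>n \<beta>\<^sub>j R\<close>.

  Part (a): as \<open>0 \<le> s - ln T(s) < 1\<close>, the range \<open>s \<le> s' \<le> s + s powr \<eta>\<close> gives
  \<open>ln T(s') \<le> ln T(s) + 2 (ln T(s)) powr \<eta>\<close>, which two windows of the doubling hypothesis cover;
  so \<open>F\<close>, and with it \<open>r\<close>, grows by a bounded factor.

  Part (b): a unit step in \<open>s\<close> multiplies \<open>T\<close> by a factor between \<open>exp (m/d)\<close> and \<open>exp 2\<close>, and on
  \<open>[T(j), T(j+1)]\<close> the doubling hypothesis makes \<open>F\<close> comparable to \<open>F(T(j))\<close>, hence to \<open>r(j)\<close>. Since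
  \<open>x powr a * ln (1/x) powr b\<close> takes comparable values at comparable arguments in \<open>(0, 1/2]\<close>, the
  block of the first series over the integers in \<open>[T(j), T(j+1))\<close> is comparable to the \<open>j\<close>-th term
  of the second.\<close>

lemma minus_ln_one_minus_bounds:
  fixes x :: real
  assumes "0 < x" "x \<le> 1/2"
  shows "x \<le> - ln (1 - x)" "- ln (1 - x) \<le> 2 * x"
proof -
  have "ln (1 - x) \<le> (1 - x) - 1" using assms by (intro ln_le_minus_one) auto
  then show "x \<le> - ln (1 - x)" by simp
  have "ln (1 / (1 - x)) \<le> 1 / (1 - x) - 1" using assms by (intro ln_le_minus_one) auto
  also have "\<dots> = x / (1 - x)" using assms by (simp add: field_simps)
  also have "\<dots> \<le> 2 * x" using assms by (simp add: field_simps)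
  finally show "- ln (1 - x) \<le> 2 * x" using assms by (simp add: ln_div)
qed

lemma powr_add_one_le:
  fixes u \<eta> :: real
  assumes "1 \<le> u" "0 \<le> \<eta>" "\<eta> \<le> 1"
  shows "(u + 1) powr \<eta> \<le> u powr \<eta> + 1"
proof -
  have "u + 1 = u * (1 + 1/u)" using assms by (simp add: field_simps)
  then have "(u + 1) powr \<eta> = u powr \<eta> * (1 + 1/u) powr \<eta>"
    using assms by (simp add: powr_mult)
  also have "\<dots> \<le> u powr \<eta> * (1 + 1/u)"
    using assms powr_mono[of \<eta> 1 "1 + 1/u"] by (intro mult_left_mono) auto
  also have "\<dots> = u powr \<eta> + u powr (\<eta> - 1)" using assms by (simp add: powr_diff field_simps)
  also have "u powr (\<eta> - 1) \<le> 1" using assms powr_mono[of "\<eta> - 1" 0 u] by simp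
  finally show ?thesis by simp
qed

lemma continuous_on_inverse_atLeast:
  fixes f g :: "real \<Rightarrow> real"
  assumes cont: "continuous_on {a..} f" and mono: "strict_mono_on {a..} f"
    and inv: "\<And>t. a \<le> t \<Longrightarrow> g (f t) = t"
    and onto: "\<And>s. f a \<le> s \<Longrightarrow> a \<le> g s \<and> f (g s) = s"
  shows "continuous_on {f a..} g"
proof (subst continuous_on_eq_continuous_within, intro ballI)
  fix x assume x: "x \<in> {f a..}"
  define b where "b = g x + 1"
  have gx: "a \<le> g x" "f (g x) = x" using onto x by auto
  have ab: "a \<le> b" using gx by (simp add: b_def)
  have "f (g x) < f b" using gx by (intro strict_mono_onD[OF mono]) (auto simp: b_def)
  then have x_less: "x < f b" using gx by simp
  have "f ` {a..b} = {f a..f b}"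
  proof
    show "f ` {a..b} \<subseteq> {f a..f b}"
      using strict_mono_on_leD[OF mono] by auto
    show "{f a..f b} \<subseteq> f ` {a..b}"
    proof
      fix y assume y: "y \<in> {f a..f b}"
      then have gy: "a \<le> g y" "f (g y) = y" using onto by auto
      have "g y \<le> b"
      proof (rule ccontr)
        assume "\<not> g y \<le> b"
        then have "f b < f (g y)" using ab gy by (intro strict_mono_onD[OF mono]) auto
        then show False using y gy by simp
      qed
      then show "y \<in> f ` {a..b}" using gy by (metis atLeastAtMost_iff image_eqI)
    qed
  qed
  moreover have "continuous_on (f ` {a..b}) g"
    using inv by (intro continuous_on_inv continuous_on_subset[OF cont]) auto
  ultimately have "continuous_on {f a..f b} g" by simp
  then have "(g \<longlongrightarrow> g x) (at x within {f a..f b})"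
    using x x_less by (simp add: continuous_on_eq_continuous_within continuous_within)
  moreover have "eventually (\<lambda>y. y \<in> {f a..f b} \<longleftrightarrow> y \<in> {f a..}) (at x)"
    using order_tendstoD(2)[OF tendsto_ident_at x_less] by eventually_elim auto
  ultimately have "(g \<longlongrightarrow> g x) (at x within {f a..})" by (rule Lim_transform_within_set)
  then show "continuous (at x within {f a..}) g" by (simp add: continuous_within)
qed

section \<open>Comparing series block by block\<close>

definition power_log_weight :: "real \<Rightarrow> real \<Rightarrow> real \<Rightarrow> real" where
  "power_log_weight a b x = x powr a * ln (1 / x) powr b"

lemma power_log_weight_nonneg: "0 \<le> power_log_weight a b x"
  by (simp add: power_log_weight_def)

lemma power_log_weight_le_of_le_mult:
  fixes a b c x y :: real
  assumes ab: "0 \<le> a" "0 \<le> b" and xy: "0 < x" "x \<le> y" "y \<le> 1" "y \<le> c * x"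
  shows "power_log_weight a b y \<le> c powr a * power_log_weight a b x"
proof -
  have "0 < c * x" using xy by linarith
  then have c: "0 < c" using xy by (simp add: zero_less_mult_iff)
  have "y powr a \<le> (c * x) powr a" using xy ab by (intro powr_mono2) auto
  also have "\<dots> = c powr a * x powr a" using c xy by (simp add: powr_mult)
  finally have "y powr a \<le> c powr a * x powr a" .
  moreover have "ln (1/y) powr b \<le> ln (1/x) powr b"
    using xy ab by (intro powr_mono2) (auto simp: ln_div)
  ultimately have "y powr a * ln (1/y) powr b \<le> (c powr a * x powr a) * ln (1/x) powr b"
    by (intro mult_mono) auto
  then show ?thesis by (simp add: power_log_weight_def mult.assoc)
qed

text \<open>With \<open>y = x / \<rho>\<close>, the power loses the factor \<open>\<rho> powr a\<close>, while
  \<open>ln (1/y) = ln (1/x) + ln \<rho> \<le> A \<rho> powr (a/b) ln (1/x)\<close> (as \<open>ln \<rho> \<le> \<rho> powr (a/b) / (a/b)\<close> and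
  \<open>ln (1/x) \<ge> ln 2\<close>, with \<open>A = 1 + b / (a ln 2)\<close>) makes the logarithmic factor gain at most
  \<open>A powr b \<rho> powr a\<close>.\<close>
lemma power_log_weight_le_of_ge:
  fixes a b x y :: real
  assumes ab: "0 < a" "0 < b" and xy: "0 < y" "y \<le> x" "x \<le> 1/2"
  shows "power_log_weight a b y \<le> (1 + b / (a * ln 2)) powr b * power_log_weight a b x"
proof -
  define A where "A = 1 + b / (a * ln 2)"
  define \<rho> where "\<rho> = x / y"
  define \<epsilon> where "\<epsilon> = a / b"
  have eps: "\<epsilon> > 0" using ab by (simp add: \<epsilon>_def)
  have rho: "\<rho> \<ge> 1" using xy by (simp add: \<rho>_def field_simps)
  have rho_eps: "1 \<le> \<rho> powr \<epsilon>" using rho eps by (simp add: ge_one_powr_ge_zero)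
  have ln2: "ln 2 \<le> ln (1/x)" using xy by (subst ln_le_cancel_iff) (auto simp: field_simps)
  have lnx: "0 \<le> ln (1/x)" using xy by (simp add: ln_div)
  have "ln \<rho> \<le> \<rho> powr \<epsilon> / \<epsilon>" using rho eps by (rule ln_powr_bound)
  also have "\<dots> \<le> ln (1/x) * (\<rho> powr \<epsilon> / (\<epsilon> * ln 2))"
    using ln2 eps by (simp add: field_simps) (intro mult_left_mono; simp)
  finally have "ln (1/y) \<le> ln (1/x) * (1 + \<rho> powr \<epsilon> / (\<epsilon> * ln 2))"
    using xy by (simp add: \<rho>_def ln_div algebra_simps)
  also have "\<dots> \<le> ln (1/x) * (A * \<rho> powr \<epsilon>)"
    using lnx rho_eps ab by (intro mult_left_mono) (auto simp: A_def \<epsilon>_def field_simps)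
  finally have "ln (1/y) powr b \<le> (ln (1/x) * (A * \<rho> powr \<epsilon>)) powr b"
    using xy ab by (intro powr_mono2) auto
  also have "\<dots> = ln (1/x) powr b * A powr b * \<rho> powr a"
    using lnx rho ab by (simp add: A_def \<epsilon>_def powr_mult powr_powr)
  finally have log: "ln (1/y) powr b \<le> ln (1/x) powr b * A powr b * \<rho> powr a" .
  have pow: "y powr a = x powr a / \<rho> powr a" using xy by (simp add: \<rho>_def powr_divide)
  have "power_log_weight a b y \<le> (x powr a / \<rho> powr a) * (ln (1/x) powr b * A powr b * \<rho> powr a)"
    unfolding power_log_weight_def pow using log by (intro mult_left_mono) auto
  also have "\<dots> = A powr b * power_log_weight a b x"
    using rho by (simp add: power_log_weight_def field_simps)
  finally show ?thesis by (simp add: A_def)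
qed

lemma power_log_weight_comparable:
  fixes a b c :: real
  assumes "0 < a" "0 < b" "1 \<le> c"
  shows "\<exists>K>0. \<forall>x y. 0 < x \<longrightarrow> x \<le> 1/2 \<longrightarrow> 0 < y \<longrightarrow> y \<le> 1/2 \<longrightarrow> y \<le> c * x
    \<longrightarrow> power_log_weight a b y \<le> K * power_log_weight a b x"
proof (intro exI conjI allI impI)
  define K where "K = max (c powr a) ((1 + b / (a * ln 2)) powr b)"
  show "0 < K" using assms by (simp add: K_def less_max_iff_disj)
  fix x y :: real
  assume xy: "0 < x" "x \<le> 1/2" "0 < y" "y \<le> 1/2" "y \<le> c * x"
  have K: "c powr a * power_log_weight a b x \<le> K * power_log_weight a b x"
    "(1 + b / (a * ln 2)) powr b * power_log_weight a b x \<le> K * power_log_weight a b x"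
    using power_log_weight_nonneg[of a b x] by (intro mult_right_mono; simp add: K_def)+
  show "power_log_weight a b y \<le> K * power_log_weight a b x"
  proof (cases "x \<le> y")
    case True
    then have "power_log_weight a b y \<le> c powr a * power_log_weight a b x"
      using assms xy by (intro power_log_weight_le_of_le_mult) auto
    then show ?thesis using K(1) by linarith
  next
    case False
    then have "power_log_weight a b y \<le> (1 + b / (a * ln 2)) powr b * power_log_weight a b x"
      using assms xy by (intro power_log_weight_le_of_ge) auto
    then show ?thesis using K(2) by linarith
  qed
qed

lemma summable_iff_summable_blocks:
  fixes u v :: "nat \<Rightarrow> real" and N :: "nat \<Rightarrow> nat" and J0 :: nat and c1 c2 :: real
  assumes u0: "\<And>k. 0 \<le> u k" and v0: "\<And>j. 0 \<le> v j"
    and N_mono: "\<And>j. J0 \<le> j \<Longrightarrow> N j \<le> N (Suc j)"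
    and N_big: "\<And>M. M \<le> N (J0 + M)"
    and upper: "\<And>j. J0 \<le> j \<Longrightarrow> sum u {N j..<N (Suc j)} \<le> c1 * v j"
    and lower: "\<And>j. J0 \<le> j \<Longrightarrow> v (Suc j) \<le> c2 * sum u {N j..<N (Suc j)}"
    and c: "0 \<le> c1" "0 \<le> c2"
  shows "summable u \<longleftrightarrow> summable v"
proof -
  define B where "B j = sum u {N j..<N (Suc j)}" for j
  have telescope: "N J0 \<le> N (J0 + M) \<and> sum u {N J0..<N (J0 + M)} = (\<Sum>i<M. B (J0 + i))" for M
  proof (induction M)
    case (Suc M)
    have "N (J0 + M) \<le> N (J0 + Suc M)" using N_mono[of "J0 + M"] by simp
    then show ?case
      using Suc sum.atLeastLessThan_concat[of "N J0" "N (J0 + M)" "N (J0 + Suc M)" u] by (simp add: B_def)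
  qed simp
  show ?thesis
  proof
    assume "summable u"
    have "summable (\<lambda>i. v (i + Suc J0))"
    proof (rule summableI_nonneg_bounded)
      fix M
      have "(\<Sum>i<M. v (i + Suc J0)) \<le> (\<Sum>i<M. c2 * B (J0 + i))"
        by (intro sum_mono) (use lower[of "J0 + _"] in \<open>simp add: B_def add.commute\<close>)
      also have "\<dots> = c2 * sum u {N J0..<N (J0 + M)}" using telescope by (simp add: sum_distrib_left)
      also have "\<dots> \<le> c2 * suminf u"
        using \<open>summable u\<close> u0 c by (intro mult_left_mono sum_le_suminf) auto
      finally show "(\<Sum>i<M. v (i + Suc J0)) \<le> c2 * suminf u" .
    qed (rule v0)
    then show "summable v" by (rule summable_iff_shift[THEN iffD1])
  next
    assume "summable v"
    then have sv: "summable (\<lambda>i. v (i + J0))" by simp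
    show "summable u"
    proof (rule summableI_nonneg_bounded)
      fix M
      have "(\<Sum>k<M. u k) \<le> (\<Sum>k<N (J0 + M). u k)"
        using N_big[of M] u0 by (intro sum_mono2) auto
      also have "\<dots> = (\<Sum>k<N J0. u k) + sum u {N J0..<N (J0 + M)}"
        using telescope[of M] sum.atLeastLessThan_concat[of 0 "N J0" "N (J0 + M)" u]
        by (simp add: lessThan_atLeast0)
      also have "sum u {N J0..<N (J0 + M)} \<le> (\<Sum>i<M. c1 * v (i + J0))"
        using telescope[of M] by (simp, intro sum_mono) (use upper in \<open>simp add: B_def add.commute\<close>)
      also have "\<dots> \<le> c1 * suminf (\<lambda>i. v (i + J0))"
        using sv v0 c by (simp add: sum_distrib_left[symmetric]) (intro mult_left_mono sum_le_suminf; simp)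
      finally show "(\<Sum>k<M. u k) \<le> (\<Sum>k<N J0. u k) + c1 * suminf (\<lambda>i. v (i + J0))" by simp
    qed (rule u0)
  qed
qed

lemma mem_ceiling_interval_iff:
  fixes A B :: real
  assumes "0 \<le> A"
  shows "k \<in> {nat \<lceil>A\<rceil>..<nat \<lceil>B\<rceil>} \<longleftrightarrow> A \<le> real k \<and> real k < B"
  using assms by (auto simp: nat_le_iff zless_nat_eq_int_zless ceiling_le_iff less_ceiling_iff)

lemma card_ceiling_interval_bounds:
  fixes A B :: real
  assumes "0 \<le> A" "A \<le> B"
  shows "B - A - 1 \<le> real (card {nat \<lceil>A\<rceil>..<nat \<lceil>B\<rceil>})"
    "real (card {nat \<lceil>A\<rceil>..<nat \<lceil>B\<rceil>}) \<le> B - A + 1"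
proof -
  have "nat \<lceil>A\<rceil> \<le> nat \<lceil>B\<rceil>" using assms by (intro nat_mono ceiling_mono)
  then have "real (card {nat \<lceil>A\<rceil>..<nat \<lceil>B\<rceil>}) = of_int \<lceil>B\<rceil> - of_int \<lceil>A\<rceil>"
    using assms by (simp add: of_nat_diff)
  then show "B - A - 1 \<le> real (card {nat \<lceil>A\<rceil>..<nat \<lceil>B\<rceil>})"
    "real (card {nat \<lceil>A\<rceil>..<nat \<lceil>B\<rceil>}) \<le> B - A + 1"
    using ceiling_correct[of A] ceiling_correct[of B] by linarith+
qed

section \<open>Dani's correspondence\<close>

lemma ln_less_iff_less_exp: "0 < x \<Longrightarrow> ln x < y \<longleftrightarrow> x < exp (y :: real)"
  using ln_less_cancel_iff[of x "exp y"] by simp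

lemma supnorm_ge_fst: "\<bar>fst v $ i\<bar> \<le> supnorm v"
  unfolding supnorm_def by (rule max.coboundedI1) (rule Max_ge, auto)

lemma supnorm_ge_snd: "\<bar>snd v $ j\<bar> \<le> supnorm v"
  unfolding supnorm_def by (rule max.coboundedI2) (rule Max_ge, auto)

lemma supnorm_less_iff: "supnorm v < c \<longleftrightarrow> (\<forall>i. \<bar>fst v $ i\<bar> < c) \<and> (\<forall>j. \<bar>snd v $ j\<bar> < c)"
  unfolding supnorm_def by simp

lemma supnorm_pos:
  assumes "v \<noteq> 0"
  shows "0 < supnorm v"
proof (rule ccontr)
  assume "\<not> 0 < supnorm v"
  then have "\<bar>fst v $ i\<bar> \<le> 0" "\<bar>snd v $ j\<bar> \<le> 0" for i j
    using supnorm_ge_fst[of v i] supnorm_ge_snd[of v j] by linarith+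
  then have "fst v = 0" "snd v = 0" by (simp_all add: vec_eq_iff)
  then show False using assms by (simp add: prod_eq_iff)
qed

lemma qnorm_less_exp_iff:
  assumes "\<forall>i. 0 < w $ i"
  shows "qnorm w x < exp c \<longleftrightarrow> (\<forall>i. \<bar>x $ i\<bar> < exp (w $ i * c))"
proof -
  have "\<bar>x $ i\<bar> powr (1 / w $ i) < exp c \<longleftrightarrow> \<bar>x $ i\<bar> < exp (w $ i * c)" for i
  proof (cases "x $ i = 0")
    case False
    have "\<bar>x $ i\<bar> powr (1 / w $ i) < exp c \<longleftrightarrow> ln \<bar>x $ i\<bar> / w $ i < c"
      using False by (simp add: powr_def)
    also have "\<dots> \<longleftrightarrow> ln \<bar>x $ i\<bar> < w $ i * c"
      using assms by (simp add: divide_less_eq mult.commute)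
    finally show ?thesis using False by (simp add: ln_less_iff_less_exp)
  qed simp
  then show ?thesis unfolding qnorm_def by auto
qed

lemma qnorm_less_exp_iff_scaled:
  assumes "\<forall>i. 0 < w $ i"
  shows "qnorm w x < exp (- \<sigma> - k * \<rho>) \<longleftrightarrow> (\<forall>i. exp (w $ i * \<sigma>) * \<bar>x $ i\<bar> < exp (- (k * w $ i * \<rho>)))"
proof -
  have "\<bar>x $ i\<bar> < exp (w $ i * (- \<sigma> - k * \<rho>)) \<longleftrightarrow> exp (w $ i * \<sigma>) * \<bar>x $ i\<bar> < exp (- (k * w $ i * \<rho>))"
    for i
  proof -
    have "exp (w $ i * (- \<sigma> - k * \<rho>)) = exp (- (k * w $ i * \<rho>)) / exp (w $ i * \<sigma>)"
      by (simp add: exp_diff[symmetric] algebra_simps)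
    then show ?thesis by (simp add: pos_less_divide_eq mult.commute)
  qed
  then show ?thesis by (simp add: qnorm_less_exp_iff[OF assms])
qed

lemma nonzero_integer_vector_component:
  assumes "q \<in> integer_vectors" "q \<noteq> 0"
  obtains j where "1 \<le> \<bar>q $ j\<bar>"
proof -
  obtain j where "q $ j \<noteq> 0" using assms(2) by (metis vec_eq_iff zero_index)
  moreover have "q $ j \<in> \<int>" using assms(1) by (simp add: integer_vectors_def)
  ultimately have "1 \<le> \<bar>q $ j\<bar>" by (intro Ints_nonzero_abs_ge1)
  then show ?thesis by (rule that)
qed

lemma uminus_integer_vectors: "p \<in> integer_vectors \<Longrightarrow> - p \<in> integer_vectors"
  by (simp add: integer_vectors_def)

lemma gflow_fst [simp]: "fst (gflow \<alpha> \<beta> s v) $ i = exp (\<alpha> $ i * s) * fst v $ i"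
  by (simp add: gflow_def)

lemma gflow_snd [simp]: "snd (gflow \<alpha> \<beta> s v) $ j = exp (- \<beta> $ j * s) * snd v $ j"
  by (simp add: gflow_def)

lemma gflow_eq_0_iff: "gflow \<alpha> \<beta> s v = 0 \<longleftrightarrow> v = 0"
  by (simp add: gflow_def prod_eq_iff vec_eq_iff del: gflow_fst gflow_snd)

lemma supnorm_gflow_Lambda_lower_bound:
  fixes \<alpha> :: "real^'m::finite" and \<beta> :: "real^'n::finite" and A :: "real^'n^'m"
  shows "\<exists>\<mu>>0. \<forall>v\<in>Lambda A. v \<noteq> 0 \<longrightarrow> \<mu> \<le> supnorm (gflow \<alpha> \<beta> s v)"
proof (intro exI conjI ballI impI)
  define \<mu> where "\<mu> = min (Min (range (\<lambda>i. exp (\<alpha> $ i * s)))) (Min (range (\<lambda>j. exp (- \<beta> $ j * s))))"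
  show "0 < \<mu>" by (simp add: \<mu>_def)
  fix v assume "v \<in> Lambda A" "v \<noteq> 0"
  then obtain p q where pq: "p \<in> integer_vectors" "q \<in> integer_vectors" and v: "v = (p + A *v q, q)"
    by (auto simp: Lambda_def)
  show "\<mu> \<le> supnorm (gflow \<alpha> \<beta> s v)"
  proof (cases "q = 0")
    case False
    then obtain j where j: "1 \<le> \<bar>q $ j\<bar>" using pq nonzero_integer_vector_component by blast
    have "\<mu> \<le> exp (- \<beta> $ j * s)" unfolding \<mu>_def by (rule min.coboundedI2, rule Min_le) auto
    also have "\<dots> \<le> \<bar>snd (gflow \<alpha> \<beta> s v) $ j\<bar>" using j by (simp add: v abs_mult)
    also have "\<dots> \<le> supnorm (gflow \<alpha> \<beta> s v)" by (rule supnorm_ge_snd)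
    finally show ?thesis .
  next
    case True
    then have "p \<noteq> 0" using \<open>v \<noteq> 0\<close> by (simp add: v zero_prod_def)
    then obtain i where i: "1 \<le> \<bar>p $ i\<bar>" using pq nonzero_integer_vector_component by blast
    have "\<mu> \<le> exp (\<alpha> $ i * s)" unfolding \<mu>_def by (rule min.coboundedI1, rule Min_le) auto
    also have "\<dots> \<le> \<bar>fst (gflow \<alpha> \<beta> s v) $ i\<bar>" using i True by (simp add: v abs_mult)
    also have "\<dots> \<le> supnorm (gflow \<alpha> \<beta> s v)" by (rule supnorm_ge_fst)
    finally show ?thesis .
  qed
qed

lemma bdd_above_ln_supnorm_gflow_Lambda:
  fixes \<alpha> :: "real^'m::finite" and \<beta> :: "real^'n::finite" and A :: "real^'n^'m"
  shows "bdd_above ((\<lambda>v. ln (1 / supnorm (gflow \<alpha> \<beta> s v))) ` (Lambda A - {0}))"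
proof -
  obtain \<mu> where \<mu>: "0 < \<mu>" "\<And>v. v \<in> Lambda A \<Longrightarrow> v \<noteq> 0 \<Longrightarrow> \<mu> \<le> supnorm (gflow \<alpha> \<beta> s v)"
    using supnorm_gflow_Lambda_lower_bound by blast
  show ?thesis
  proof (rule bdd_aboveI2)
    fix v assume "v \<in> Lambda A - {0}"
    then have "\<mu> \<le> supnorm (gflow \<alpha> \<beta> s v)" "0 < supnorm (gflow \<alpha> \<beta> s v)"
      using \<mu>(2) by (auto simp: supnorm_pos gflow_eq_0_iff)
    then show "ln (1 / supnorm (gflow \<alpha> \<beta> s v)) \<le> ln (1 / \<mu>)" using \<mu>(1) by (simp add: ln_div)
  qed
qed

lemma Lambda_minus_zero_nonempty:
  fixes A :: "real^'n::finite^'m::finite"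
  shows "Lambda A - {0} \<noteq> {}"
proof -
  define e :: "real^'m" where "e = (\<chi> i. 1)"
  have "e \<in> integer_vectors" "(0 :: real^'n) \<in> integer_vectors"
    by (auto simp: integer_vectors_def e_def)
  then have "(e + A *v 0, 0) \<in> Lambda A" by (auto simp: Lambda_def)
  moreover have "(e + A *v 0, 0) \<noteq> 0" by (simp add: e_def vec_eq_iff zero_prod_def)
  ultimately show ?thesis by blast
qed

lemma less_Delta_gflow_Lambda_iff:
  fixes \<alpha> :: "real^'m::finite" and \<beta> :: "real^'n::finite" and A :: "real^'n^'m"
  shows "c < Delta (gflow \<alpha> \<beta> s ` Lambda A) \<longleftrightarrow>
    (\<exists>v\<in>Lambda A - {0}. supnorm (gflow \<alpha> \<beta> s v) < exp (- c))"
proof -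
  have "gflow \<alpha> \<beta> s ` Lambda A - {0} = gflow \<alpha> \<beta> s ` (Lambda A - {0})"
    by (auto simp: gflow_eq_0_iff)
  then have "Delta (gflow \<alpha> \<beta> s ` Lambda A) = (SUP v\<in>Lambda A - {0}. ln (1 / supnorm (gflow \<alpha> \<beta> s v)))"
    unfolding Delta_def by (simp add: image_image)
  then have "c < Delta (gflow \<alpha> \<beta> s ` Lambda A) \<longleftrightarrow>
      (\<exists>v\<in>Lambda A - {0}. c < ln (1 / supnorm (gflow \<alpha> \<beta> s v)))"
    using less_cSUP_iff[OF Lambda_minus_zero_nonempty bdd_above_ln_supnorm_gflow_Lambda] by simp
  also have "\<dots> \<longleftrightarrow> (\<exists>v\<in>Lambda A - {0}. supnorm (gflow \<alpha> \<beta> s v) < exp (- c))"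
  proof (intro bex_cong refl)
    fix v assume "v \<in> Lambda A - {0}"
    then have pos: "0 < supnorm (gflow \<alpha> \<beta> s v)" by (simp add: supnorm_pos gflow_eq_0_iff)
    then have "c < ln (1 / supnorm (gflow \<alpha> \<beta> s v)) \<longleftrightarrow> ln (supnorm (gflow \<alpha> \<beta> s v)) < - c"
      by (auto simp: ln_div)
    then show "c < ln (1 / supnorm (gflow \<alpha> \<beta> s v)) \<longleftrightarrow> supnorm (gflow \<alpha> \<beta> s v) < exp (- c)"
      using pos by (simp add: ln_less_iff_less_exp)
  qed
  finally show ?thesis .
qed

lemma Dirichlet_solution_if_less_Delta:
  fixes \<alpha> :: "real^'m::finite" and \<beta> :: "real^'n::finite" and A :: "real^'n^'m"
    and \<omega> \<rho> s :: real
  assumes \<alpha>_pos: "\<forall>i. 0 < \<alpha> $ i" and \<beta>_pos: "\<forall>j. 0 < \<beta> $ j"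
    and \<omega>: "\<And>i. real CARD('m) * \<alpha> $ i \<le> \<omega>" "\<And>j. real CARD('n) * \<beta> $ j \<le> \<omega>"
    and \<rho>: "0 \<le> \<rho>" and s: "0 \<le> s"
    and Delta: "\<omega> * \<rho> < Delta (gflow \<alpha> \<beta> s ` Lambda A)"
  shows "\<exists>p q. p \<in> integer_vectors \<and> q \<in> integer_vectors \<and> q \<noteq> 0 \<and>
    qnorm \<alpha> (A *v q - p) < exp (- s - real CARD('m) * \<rho>) \<and> qnorm \<beta> q < exp (s - real CARD('n) * \<rho>)"
proof -
  obtain v where "v \<in> Lambda A - {0}" and small: "supnorm (gflow \<alpha> \<beta> s v) < exp (- (\<omega> * \<rho>))"
    using Delta less_Delta_gflow_Lambda_iff by blast
  then obtain p q where pq: "p \<in> integer_vectors" "q \<in> integer_vectors" and v: "v = (p + A *v q, q)"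
    and "v \<noteq> 0" by (auto simp: Lambda_def)
  have fst_small: "exp (\<alpha> $ i * s) * \<bar>(A *v q - - p) $ i\<bar> < exp (- (\<omega> * \<rho>))" for i
    using small by (simp add: supnorm_less_iff v abs_mult add.commute)
  have snd_small: "exp (- \<beta> $ j * s) * \<bar>q $ j\<bar> < exp (- (\<omega> * \<rho>))" for j
    using small by (simp add: supnorm_less_iff v abs_mult)
  have "q \<noteq> 0"
  proof
    assume "q = 0"
    then have "p \<noteq> 0" using \<open>v \<noteq> 0\<close> by (simp add: v zero_prod_def)
    then obtain i where i: "1 \<le> \<bar>p $ i\<bar>" using pq nonzero_integer_vector_component by blast
    have "0 < real CARD('m) * \<alpha> $ i" using \<alpha>_pos by simp
    then have "exp (- (\<omega> * \<rho>)) \<le> 1" using \<omega>(1)[of i] \<rho> by simp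
    also have "1 \<le> exp (\<alpha> $ i * s) * \<bar>p $ i\<bar>"
      using \<alpha>_pos[rule_format, of i] s i mult_mono[of 1 "exp (\<alpha> $ i * s)" 1 "\<bar>p $ i\<bar>"] by simp
    finally show False using fst_small[of i] \<open>q = 0\<close> by simp
  qed
  moreover have "qnorm \<alpha> (A *v q - - p) < exp (- s - real CARD('m) * \<rho>)"
    unfolding qnorm_less_exp_iff_scaled[OF \<alpha>_pos]
  proof
    fix i
    have "exp (- (\<omega> * \<rho>)) \<le> exp (- (real CARD('m) * \<alpha> $ i * \<rho>))"
      using \<omega>(1)[of i] \<rho> by (simp add: mult_right_mono)
    then show "exp (\<alpha> $ i * s) * \<bar>(A *v q - - p) $ i\<bar> < exp (- (real CARD('m) * \<alpha> $ i * \<rho>))"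
      using fst_small[of i] by linarith
  qed
  moreover have "qnorm \<beta> q < exp (- (- s) - real CARD('n) * \<rho>)"
    unfolding qnorm_less_exp_iff_scaled[OF \<beta>_pos]
  proof
    fix j
    have "exp (\<beta> $ j * - s) * \<bar>q $ j\<bar> < exp (- (\<omega> * \<rho>))" using snd_small[of j] by simp
    moreover have "exp (- (\<omega> * \<rho>)) \<le> exp (- (real CARD('n) * \<beta> $ j * \<rho>))"
      using \<omega>(2)[of j] \<rho> by (simp add: mult_right_mono)
    ultimately show "exp (\<beta> $ j * - s) * \<bar>q $ j\<bar> < exp (- (real CARD('n) * \<beta> $ j * \<rho>))"
      by linarith
  qed
  ultimately show ?thesis
    using pq uminus_integer_vectors by (intro exI[of _ "- p"] exI[of _ q]) simp
qed

lemma less_Delta_if_Dirichlet_solution: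
  fixes \<alpha> :: "real^'m::finite" and \<beta> :: "real^'n::finite" and A :: "real^'n^'m"
    and \<omega> \<rho> s :: real
  assumes \<alpha>_pos: "\<forall>i. 0 < \<alpha> $ i" and \<beta>_pos: "\<forall>j. 0 < \<beta> $ j"
    and \<omega>: "\<And>i. \<omega> \<le> real CARD('m) * \<alpha> $ i" "\<And>j. \<omega> \<le> real CARD('n) * \<beta> $ j"
    and \<rho>: "0 \<le> \<rho>"
    and pq: "p \<in> integer_vectors" "q \<in> integer_vectors" "q \<noteq> 0"
    and approx: "qnorm \<alpha> (A *v q - p) < exp (- s - real CARD('m) * \<rho>)"
    and denom: "qnorm \<beta> q < exp (s - real CARD('n) * \<rho>)"
  shows "\<omega> * \<rho> < Delta (gflow \<alpha> \<beta> s ` Lambda A)"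
  unfolding less_Delta_gflow_Lambda_iff
proof
  show "(- p + A *v q, q) \<in> Lambda A - {0}"
    using pq uminus_integer_vectors by (auto simp: Lambda_def zero_prod_def)
  have "exp (\<alpha> $ i * s) * \<bar>(A *v q - p) $ i\<bar> < exp (- (\<omega> * \<rho>))" for i
  proof -
    have "exp (\<alpha> $ i * s) * \<bar>(A *v q - p) $ i\<bar> < exp (- (real CARD('m) * \<alpha> $ i * \<rho>))"
      using approx by (simp add: qnorm_less_exp_iff_scaled[OF \<alpha>_pos])
    also have "\<dots> \<le> exp (- (\<omega> * \<rho>))" using \<omega>(1)[of i] \<rho> by (simp add: mult_right_mono)
    finally show ?thesis .
  qed
  moreover have "exp (- \<beta> $ j * s) * \<bar>q $ j\<bar> < exp (- (\<omega> * \<rho>))" for j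
  proof -
    have "exp (\<beta> $ j * - s) * \<bar>q $ j\<bar> < exp (- (real CARD('n) * \<beta> $ j * \<rho>))"
      using denom qnorm_less_exp_iff_scaled[OF \<beta>_pos, of q "- s"] by simp
    also have "\<dots> \<le> exp (- (\<omega> * \<rho>))" using \<omega>(2)[of j] \<rho> by (simp add: mult_right_mono)
    finally show ?thesis by simp
  qed
  ultimately show "supnorm (gflow \<alpha> \<beta> s (- p + A *v q, q)) < exp (- (\<omega> * \<rho>))"
    by (simp add: supnorm_less_iff abs_mult add.commute)
qed

section \<open>The reparametrisation \<open>r\<close>\<close>

locale dirichlet_function =
  fixes m n :: nat and \<psi> :: "real \<Rightarrow> real" and t0 C \<eta> :: real
  assumes m_pos: "0 < m" and n_pos: "0 < n"
    and t0: "1 < t0"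
    and psi_cont: "continuous_on {t0..} \<psi>"
    and psi_decr: "\<forall>x y. t0 \<le> x \<longrightarrow> x \<le> y \<longrightarrow> \<psi> y \<le> \<psi> x"
    and psi_bounds: "\<forall>t\<ge>t0. 1 / (2 * t) \<le> \<psi> t \<and> \<psi> t < 1 / t"
    and C: "1 \<le> C" and eta: "0 < \<eta>" "\<eta> < 1"
    and F_doubling: "\<forall>t1 t2. t0 \<le> t1 \<longrightarrow> t1 \<le> t2 \<longrightarrow> t2 \<le> t1 * exp ((ln t1) powr \<eta>)
                        \<longrightarrow> Fpsi \<psi> t2 \<le> C * Fpsi \<psi> t1"
begin

abbreviation "S \<equiv> s_of m n \<psi>"
abbreviation "T \<equiv> t_of m n \<psi> t0"
abbreviation "F \<equiv> Fpsi \<psi>"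
abbreviation "r \<equiv> r_fun m n \<psi> t0"
abbreviation "s0 \<equiv> S t0"

definition "d = real (m + n)"
definition "R t = - (1 / d) * ln (t * \<psi> t)"

lemma d_ge_2: "2 \<le> d"
  using m_pos n_pos by (simp add: d_def)

lemma n_less_d: "real n < d"
  using m_pos by (simp add: d_def)

lemma t_psi_bounds:
  assumes "t0 \<le> t"
  shows "1 < t" "0 < \<psi> t" "1/2 \<le> t * \<psi> t" "t * \<psi> t < 1"
proof -
  show "1 < t" using assms t0 by simp
  moreover have "1 / (2 * t) \<le> \<psi> t" "\<psi> t < 1 / t" using psi_bounds assms by auto
  ultimately show "0 < \<psi> t" "1/2 \<le> t * \<psi> t" "t * \<psi> t < 1"
    by (auto simp: field_simps intro: less_le_trans[of 0 "1 / (2 * t)"])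
qed

lemma F_bounds:
  assumes "t0 \<le> t"
  shows "0 < F t" "F t \<le> 1/2"
  using t_psi_bounds[OF assms] by (simp_all add: Fpsi_def)

lemma R_bounds:
  assumes "t0 \<le> t"
  shows "F t \<le> d * R t" "R t \<le> F t" "0 < R t" "R t < 1 / d"
proof -
  have R_eq: "R t = - ln (1 - F t) / d" by (simp add: R_def Fpsi_def)
  note F = F_bounds[OF assms]
  note ln_bounds = minus_ln_one_minus_bounds[OF F]
  have d: "2 \<le> d" by (rule d_ge_2)
  show FR: "F t \<le> d * R t" using ln_bounds d by (simp add: R_eq)
  have "- ln (1 - F t) \<le> d * F t" using ln_bounds F mult_right_mono[OF d, of "F t"] by linarith
  then show "R t \<le> F t" unfolding R_eq using d by (subst pos_divide_le_eq) (auto simp: mult.commute)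
  show "0 < R t" using FR F d zero_less_mult_iff[of d "R t"] by linarith
  have "ln (1/2) \<le> ln (1 - F t)" using F by (subst ln_le_cancel_iff) auto
  then have "- ln (1 - F t) \<le> ln 2" by (simp add: ln_div)
  then show "R t < 1 / d"
    unfolding R_eq using ln_2_less_1 d by (intro divide_strict_right_mono) auto
qed

lemma S_eq:
  assumes "t0 \<le> t"
  shows "S t = ln t + n * R t"
proof -
  have "0 < d" using d_ge_2 by simp
  then have m_div: "real m / d = 1 - real n / d" by (simp add: d_def field_simps)
  have "S t = real m / d * ln t - real n / d * ln (\<psi> t)" by (simp add: s_of_def d_def)
  also have "\<dots> = ln t - real n / d * (ln t + ln (\<psi> t))" unfolding m_div by (simp add: algebra_simps add_divide_distrib)
  also have "\<dots> = ln t + n * R t" using t_psi_bounds[OF assms] by (simp add: R_def ln_mult)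
  finally show ?thesis .
qed

lemma exp_S_minus_R:
  assumes "t0 \<le> t"
  shows "exp (S t - n * R t) = t" "exp (- S t - m * R t) = \<psi> t"
proof -
  note tpsi = t_psi_bounds[OF assms]
  show "exp (S t - n * R t) = t" using S_eq[OF assms] tpsi by simp
  have "0 < d" using d_ge_2 by simp
  then have "d * R t = - ln t - ln (\<psi> t)" using tpsi by (simp add: R_def ln_mult)
  moreover have "- S t - m * R t = - ln t - d * R t" by (simp add: S_eq[OF assms] d_def algebra_simps)
  ultimately show "exp (- S t - m * R t) = \<psi> t" using tpsi by simp
qed

lemma S_bounds:
  assumes "t0 \<le> t"
  shows "ln t \<le> S t" "S t < ln t + 1"
proof -
  have "real n * R t < real n * (1 / d)"
    using R_bounds[OF assms] n_pos by (intro mult_strict_left_mono) auto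
  also have "\<dots> < 1" using n_less_d d_ge_2 by simp
  finally show "ln t \<le> S t" "S t < ln t + 1"
    using R_bounds[OF assms] by (simp_all add: S_eq[OF assms])
qed

lemma S_strict_mono: "strict_mono_on {t0..} S"
proof (rule strict_mono_onI)
  fix x y assume xy: "x \<in> {t0..}" "y \<in> {t0..}" "x < y"
  have "ln (\<psi> y) \<le> ln (\<psi> x)"
    using xy psi_decr t_psi_bounds(2)[of x] t_psi_bounds(2)[of y] by simp
  moreover have "ln x < ln y" using xy t_psi_bounds(1)[of x] by simp
  ultimately have "real m / real (m + n) * ln x < real m / real (m + n) * ln y"
    "real n / real (m + n) * ln (\<psi> y) \<le> real n / real (m + n) * ln (\<psi> x)"
    using m_pos by (intro mult_strict_left_mono mult_left_mono; simp)+
  then show "S x < S y" unfolding s_of_def by linarith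
qed

lemma S_continuous: "continuous_on {t0..} S"
proof -
  have "t \<noteq> 0" "\<psi> t \<noteq> 0" if "t0 \<le> t" for t using t_psi_bounds[OF that] by auto
  then show ?thesis unfolding s_of_def by (intro continuous_intros psi_cont) auto
qed

lemma S_less_iff:
  assumes "t0 \<le> x" "t0 \<le> y"
  shows "S x < S y \<longleftrightarrow> x < y"
  using strict_mono_on_less[OF S_strict_mono] assms by simp

lemma ex1_S_eq:
  assumes "s0 \<le> s"
  shows "\<exists>!t. t0 \<le> t \<and> s = S t"
proof -
  define b where "b = max t0 (exp s)"
  have "s = ln (exp s)" by simp
  also have "\<dots> \<le> ln b" using t0 by (subst ln_le_cancel_iff) (auto simp: b_def)
  also have "\<dots> \<le> S b" by (rule S_bounds) (simp add: b_def)
  finally have "s \<le> S b" .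
  moreover have "continuous_on {t0..b} S" using S_continuous by (rule continuous_on_subset) auto
  ultimately obtain t where "t0 \<le> t" "S t = s" using IVT'[of S t0 s b] assms by (auto simp: b_def)
  moreover have "t' = t" if "t0 \<le> t'" "s = S t'" for t'
    using S_less_iff[of t t'] S_less_iff[of t' t] that \<open>t0 \<le> t\<close> \<open>S t = s\<close>
    by (cases t t' rule: linorder_cases) auto
  ultimately show ?thesis by metis
qed

lemma T_bounds:
  assumes "s0 \<le> s"
  shows "t0 \<le> T s" "S (T s) = s"
  using theI'[OF ex1_S_eq[OF assms]] by (auto simp: t_of_def)

lemma T_S:
  assumes "t0 \<le> t"
  shows "T (S t) = t"
  unfolding t_of_def
proof (rule the_equality)
  fix t' assume "t0 \<le> t' \<and> S t = S t'"
  then show "t' = t" using S_less_iff[of t t'] S_less_iff[of t' t] assms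
    by (cases t t' rule: linorder_cases) auto
qed (use assms in simp)

lemma T_mono:
  assumes "s0 \<le> s1" "s1 \<le> s2"
  shows "T s1 \<le> T s2"
  using S_less_iff[of "T s2" "T s1"] T_bounds[of s1] T_bounds[of s2] assms by force

lemma r_eq: "r s = R (T s)"
  by (simp add: r_fun_def R_def d_def)

lemma ln_T:
  assumes "s0 \<le> s"
  shows "ln (T s) = s - n * r s" "s - 1 < ln (T s)" "ln (T s) \<le> s"
proof -
  have t: "t0 \<le> T s" using T_bounds(1)[OF assms] .
  have "s = ln (T s) + n * r s" "ln (T s) \<le> s" "s < ln (T s) + 1"
    using S_eq[OF t] S_bounds[OF t] T_bounds(2)[OF assms] by (simp_all add: r_eq)
  then show "ln (T s) = s - n * r s" "s - 1 < ln (T s)" "ln (T s) \<le> s" by linarith+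
qed

lemma T_continuous: "continuous_on {s0..} T"
  by (rule continuous_on_inverse_atLeast[OF S_continuous S_strict_mono]) (auto simp: T_S T_bounds)

lemma r_continuous: "continuous_on {s0..} r"
proof -
  have T: "T ` {s0..} \<subseteq> {t0..}" using T_bounds by auto
  have "T s * \<psi> (T s) \<noteq> 0" if "s0 \<le> s" for s
    using t_psi_bounds[OF T_bounds(1)[OF that]] by auto
  then have "continuous_on {s0..} (\<lambda>s. - (1/d) * ln (T s * \<psi> (T s)))"
    by (intro continuous_intros T_continuous continuous_on_compose2[OF psi_cont T_continuous T]) auto
  then show ?thesis by (simp add: r_eq R_def)
qed

lemma r_bounds:
  assumes "s0 \<le> s"
  shows "0 < r s" "r s < 1 / d"
  using R_bounds[OF T_bounds(1)[OF assms]] by (simp_all add: r_eq)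

lemma two_le_ln_T_powr:
  assumes "s0 \<le> s" "1 + 2 powr (1/\<eta>) \<le> s"
  shows "2 \<le> ln (T s) powr \<eta>"
proof -
  have "2 powr (1/\<eta>) \<le> ln (T s)" using ln_T(2)[OF assms(1)] assms(2) by linarith
  then have "(2 powr (1/\<eta>)) powr \<eta> \<le> ln (T s) powr \<eta>" using eta by (intro powr_mono2) auto
  then show ?thesis using eta by (simp add: powr_powr)
qed

lemma F_le_on_window:
  assumes "t0 \<le> a" "a \<le> t" "t \<le> b" "b \<le> a * exp (ln a powr \<eta>)"
  shows "F t \<le> C * F a" "F b \<le> C * F t"
proof -
  show "F t \<le> C * F a" using F_doubling assms by auto
  have "1 < a" using assms(1) t0 by simp
  then have "ln a powr \<eta> \<le> ln t powr \<eta>" using assms(2) eta by (intro powr_mono2) auto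
  then have "a * exp (ln a powr \<eta>) \<le> t * exp (ln t powr \<eta>)"
    using assms \<open>1 < a\<close> by (intro mult_mono) auto
  then show "F b \<le> C * F t" using F_doubling assms by auto
qed

text \<open>Two windows of the doubling hypothesis cover \<open>ln t2 \<le> ln t1 + 2 (ln t1) powr \<eta>\<close>:
  the first ends at \<open>t' = t1 exp ((ln t1) powr \<eta>)\<close>, and \<open>ln t' \<ge> ln t1\<close> makes the second one long enough.\<close>
lemma F_le_C_squared:
  assumes t1: "t0 \<le> t1" and t12: "t1 \<le> t2" and t2: "ln t2 \<le> ln t1 + 2 * ln t1 powr \<eta>"
  shows "F t2 \<le> C\<^sup>2 * F t1"
proof -
  define t' where "t' = t1 * exp (ln t1 powr \<eta>)"
  have "1 < t1" using t1 t0 by simp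
  have t1_t': "t1 \<le> t'" using \<open>1 < t1\<close> by (simp add: t'_def)
  have "F t1 \<le> C * F t1" using C F_bounds[OF t1] by simp
  then have C_F: "C * F t1 \<le> C\<^sup>2 * F t1" using C by (simp add: power2_eq_square mult.assoc)
  show ?thesis
  proof (cases "t2 \<le> t'")
    case True
    then have "F t2 \<le> C * F t1" using F_le_on_window(1)[OF t1 t12] by (simp add: t'_def)
    then show ?thesis using C_F by simp
  next
    case False
    have ln_t': "ln t' = ln t1 + ln t1 powr \<eta>" using \<open>1 < t1\<close> by (simp add: t'_def ln_mult)
    then have "ln t1 powr \<eta> \<le> ln t' powr \<eta>" using \<open>1 < t1\<close> eta by (intro powr_mono2) auto
    then have "ln t2 \<le> ln (t' * exp (ln t' powr \<eta>))"
      using t2 ln_t' t1_t' \<open>1 < t1\<close> by (simp add: ln_mult)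
    then have "t2 \<le> t' * exp (ln t' powr \<eta>)"
      using t1_t' t12 \<open>1 < t1\<close> by (subst (asm) ln_le_cancel_iff) auto
    then have "F t2 \<le> C * F t'" using F_le_on_window(2)[of t' t' t2] t1 t1_t' False by simp
    also have "\<dots> \<le> C * (C * F t1)"
      using F_le_on_window(1)[OF t1 t1_t' order_refl] C by (simp add: t'_def)
    finally show ?thesis by (simp add: power2_eq_square mult.assoc)
  qed
qed

lemma r_doubling:
  "\<exists>C\<^sub>r\<ge>1. \<exists>s_star\<ge>s0. \<forall>s1 s2. s_star \<le> s1 \<longrightarrow> s1 \<le> s2 \<longrightarrow> s2 \<le> s1 + s1 powr \<eta>
     \<longrightarrow> r s2 \<le> C\<^sub>r * r s1"
proof (intro exI conjI allI impI)
  show "1 \<le> C\<^sup>2 * d" using C d_ge_2 by (simp add: one_le_power mult_mono[of 1 "C\<^sup>2" 1 d, simplified])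
  show "s0 \<le> max s0 (2 + 2 powr (1/\<eta>))" by simp
  fix s1 s2 assume s1: "max s0 (2 + 2 powr (1/\<eta>)) \<le> s1" and "s1 \<le> s2" "s2 \<le> s1 + s1 powr \<eta>"
  then have s: "s0 \<le> s1" "s0 \<le> s2" "1 + 2 powr (1/\<eta>) \<le> s1" by auto
  define L where "L = ln (T s1)"
  have L: "s1 - 1 < L" using ln_T(2)[OF s(1)] by (simp add: L_def)
  have "2 + 2 powr (1/\<eta>) \<le> s1" using s1 by simp
  then have "1 \<le> s1 - 1" using powr_ge_zero[of 2 "1/\<eta>"] by linarith
  then have "s1 powr \<eta> \<le> (s1 - 1) powr \<eta> + 1" using powr_add_one_le[of "s1 - 1" \<eta>] eta by simp
  also have "(s1 - 1) powr \<eta> \<le> L powr \<eta>" using \<open>1 \<le> s1 - 1\<close> L eta by (intro powr_mono2) auto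
  finally have "ln (T s2) \<le> L + 2 * L powr \<eta>"
    using ln_T(3)[OF s(2)] two_le_ln_T_powr[OF s(1,3)] L \<open>s2 \<le> s1 + s1 powr \<eta>\<close> by (simp add: L_def)
  then have F: "F (T s2) \<le> C\<^sup>2 * F (T s1)"
    using T_bounds(1)[OF s(1)] T_mono[OF s(1) \<open>s1 \<le> s2\<close>] by (intro F_le_C_squared) (auto simp: L_def)
  have "r s2 \<le> F (T s2)" using R_bounds(2)[OF T_bounds(1)[OF s(2)]] by (simp add: r_eq)
  also have "\<dots> \<le> C\<^sup>2 * F (T s1)" by (rule F)
  also have "\<dots> \<le> C\<^sup>2 * (d * r s1)"
    using R_bounds(1)[OF T_bounds(1)[OF s(1)]] by (intro mult_left_mono) (auto simp: r_eq)
  finally show "r s2 \<le> C\<^sup>2 * d * r s1" by (simp add: mult.assoc)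
qed

definition "\<delta> = real m / d"

lemma n_mult_r_bounds:
  assumes "s0 \<le> s"
  shows "0 < n * r s" "n * r s < 1 - \<delta>"
proof -
  show "0 < n * r s" using r_bounds[OF assms] n_pos by simp
  have "n * r s < n * (1 / d)" using r_bounds[OF assms] n_pos by (intro mult_strict_left_mono) auto
  also have "\<dots> = 1 - \<delta>" using d_ge_2 by (simp add: \<delta>_def d_def field_simps)
  finally show "n * r s < 1 - \<delta>" .
qed

lemma \<delta>_pos: "0 < \<delta>"
  using m_pos d_ge_2 by (simp add: \<delta>_def)

lemma T_step_bounds:
  assumes "s0 \<le> s"
  shows "T s * exp \<delta> \<le> T (s + 1)" "T (s + 1) \<le> T s * exp 2" "exp s \<le> T (s + 1)"
proof -
  have s': "s0 \<le> s + 1" using assms by simp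
  have pos: "0 < T s" "0 < T (s + 1)" using T_bounds(1)[OF assms] T_bounds(1)[OF s'] t0 by auto
  note ln_T(1)[OF assms] ln_T(1)[OF s'] n_mult_r_bounds[OF assms] n_mult_r_bounds[OF s']
  then have "ln (T s * exp \<delta>) \<le> ln (T (s + 1))" "ln (T (s + 1)) \<le> ln (T s * exp 2)"
    "ln (exp s) \<le> ln (T (s + 1))"
    using pos \<delta>_pos by (simp_all add: ln_mult)
  then show "T s * exp \<delta> \<le> T (s + 1)" "T (s + 1) \<le> T s * exp 2" "exp s \<le> T (s + 1)"
    using pos by (simp_all only: ln_le_cancel_iff exp_gt_zero mult_pos_pos)
qed

lemma T_step_window:
  assumes "s0 \<le> s" "1 + 2 powr (1/\<eta>) \<le> s"
  shows "T (s + 1) \<le> T s * exp (ln (T s) powr \<eta>)"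
proof -
  have "exp 2 \<le> exp (ln (T s) powr \<eta>)" using two_le_ln_T_powr[OF assms] by simp
  then have "T s * exp 2 \<le> T s * exp (ln (T s) powr \<eta>)"
    using T_bounds(1)[OF assms(1)] t0 by (intro mult_left_mono) auto
  then show ?thesis using T_step_bounds(2)[OF assms(1)] by linarith
qed

lemma exp_minus_one_less_T:
  assumes "s0 \<le> s"
  shows "exp (s - 1) < T s"
  using exp_less_mono[OF ln_T(2)[OF assms]] T_bounds(1)[OF assms] t0 by simp

lemma nat_ceiling_T_blocks:
  fixes J0 :: nat
  assumes "s0 \<le> J0"
  shows "J0 \<le> j \<Longrightarrow> nat \<lceil>T j\<rceil> \<le> nat \<lceil>T (Suc j)\<rceil>" "M \<le> nat \<lceil>T (J0 + M)\<rceil>"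
proof -
  show "nat \<lceil>T j\<rceil> \<le> nat \<lceil>T (Suc j)\<rceil>" if "J0 \<le> j"
    using that assms T_mono[of j "Suc j"] by (intro nat_mono ceiling_mono) simp
  have s: "s0 \<le> real (J0 + M)" using assms by simp
  have "real M \<le> exp (real (J0 + M) - 1)" using exp_ge_add_one_self[of "real (J0 + M) - 1"] by simp
  also have "\<dots> < T (J0 + M)" by (rule exp_minus_one_less_T[OF s])
  finally show "M \<le> nat \<lceil>T (J0 + M)\<rceil>" by (simp add: le_nat_iff le_ceiling_iff)
qed

lemma card_block_le:
  assumes "s0 \<le> s"
  shows "real (card {nat \<lceil>T s\<rceil>..<nat \<lceil>T (s + 1)\<rceil>}) \<le> exp 2 * T s"
proof -
  have "1 < T s" using T_bounds(1)[OF assms] t0 by simp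
  moreover have "T s \<le> T (s + 1)" using T_mono[OF assms] by simp
  ultimately have "real (card {nat \<lceil>T s\<rceil>..<nat \<lceil>T (s + 1)\<rceil>}) \<le> T (s + 1) - T s + 1"
    using card_ceiling_interval_bounds(2)[of "T s" "T (s + 1)"] by simp
  moreover have "T (s + 1) \<le> exp 2 * T s" using T_step_bounds(2)[OF assms] by (simp add: mult.commute)
  ultimately show ?thesis using \<open>1 < T s\<close> by linarith
qed

lemma card_block_ge:
  assumes "s0 \<le> s" "2 / (1 - exp (- \<delta>)) \<le> s"
  shows "(1 - exp (- \<delta>)) / 2 * T (s + 1) \<le> real (card {nat \<lceil>T s\<rceil>..<nat \<lceil>T (s + 1)\<rceil>})"
proof -
  define c where "c = (1 - exp (- \<delta>)) / 2"
  have c: "0 < c" using \<delta>_pos by (simp add: c_def)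
  have "1 \<le> c * s" using assms(2) c by (simp add: c_def field_simps)
  also have "\<dots> \<le> c * T (s + 1)"
    using T_step_bounds(3)[OF assms(1)] exp_ge_add_one_self[of s] c by (intro mult_left_mono) linarith+
  finally have "1 \<le> c * T (s + 1)" .
  moreover have "T s \<le> T (s + 1) * exp (- \<delta>)" using T_step_bounds(1)[OF assms(1)] by (simp add: exp_minus field_simps)
  moreover have "0 \<le> T s" "T s \<le> T (s + 1)" using T_bounds(1)[OF assms(1)] t0 T_mono[OF assms(1)] by auto
  ultimately show ?thesis
    using card_ceiling_interval_bounds(1)[of "T s" "T (s + 1)"] by (simp add: c_def field_simps)
qed

lemma le_max_C_d_mult:
  assumes "0 \<le> x"
  shows "x \<le> max C d * x" "d * x \<le> max C d * x" "C * x \<le> max C d * x"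
  using assms C mult_right_mono[of 1 "max C d" x] mult_right_mono[of d "max C d" x]
    mult_right_mono[of C "max C d" x] by auto

context
  fixes a b K :: real
  assumes K_pos: "0 < K"
    and weight_comparable: "\<And>x y. 0 < x \<Longrightarrow> x \<le> 1/2 \<Longrightarrow> 0 < y \<Longrightarrow> y \<le> 1/2 \<Longrightarrow> y \<le> max C d * x
      \<Longrightarrow> power_log_weight a b y \<le> K * power_log_weight a b x"
begin

lemma weight_F_R_comparable:
  assumes "t0 \<le> t"
  shows "power_log_weight a b (F t) \<le> K * power_log_weight a b (R t)"
    "power_log_weight a b (R t) \<le> K * power_log_weight a b (F t)"
proof -
  note F = F_bounds[OF assms] and R = R_bounds[OF assms]
  have "F t \<le> max C d * R t" using R(1) le_max_C_d_mult(2)[of "R t"] R(3) by linarith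
  then show "power_log_weight a b (F t) \<le> K * power_log_weight a b (R t)"
    using F R by (intro weight_comparable) auto
  have "R t \<le> max C d * F t" using R(2) le_max_C_d_mult(1)[of "F t"] F(1) by linarith
  then show "power_log_weight a b (R t) \<le> K * power_log_weight a b (F t)"
    using F R by (intro weight_comparable) auto
qed

lemma weight_F_comparable:
  assumes "t0 \<le> t" "t0 \<le> t'" "F t' \<le> C * F t"
  shows "power_log_weight a b (F t') \<le> K * power_log_weight a b (F t)"
proof -
  have "F t' \<le> max C d * F t" using assms(3) le_max_C_d_mult(3)[of "F t"] F_bounds[OF assms(1)] by linarith
  then show ?thesis using F_bounds assms by (intro weight_comparable) auto
qed

lemma block_sum_upper:
  fixes j :: nat
  assumes j: "s0 \<le> j" "1 + 2 powr (1/\<eta>) \<le> j"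
  shows "(\<Sum>k\<in>{nat \<lceil>T j\<rceil>..<nat \<lceil>T (real j + 1)\<rceil>}. 1 / real k * power_log_weight a b (F k))
    \<le> exp 2 * K\<^sup>2 * power_log_weight a b (r j)"
proof -
  define A B where "A = T j" and "B = T (real j + 1)"
  define Y where "Y = K\<^sup>2 * power_log_weight a b (r j)"
  have Y: "0 \<le> Y" using power_log_weight_nonneg by (simp add: Y_def)
  have A: "t0 \<le> A" "1 < A" using T_bounds(1)[OF j(1)] t0 by (auto simp: A_def)
  have window: "B \<le> A * exp (ln A powr \<eta>)" using T_step_window[OF j] by (simp add: A_def B_def)
  have summand_le: "1 / real k * power_log_weight a b (F k) \<le> 1 / A * Y"
    if "k \<in> {nat \<lceil>A\<rceil>..<nat \<lceil>B\<rceil>}" for k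
  proof -
    have k: "A \<le> real k" "real k < B" using that A mem_ceiling_interval_iff[of A] by auto
    have "power_log_weight a b (F k) \<le> K * power_log_weight a b (F A)"
      using A k F_le_on_window(1)[OF A(1) k(1) _ window] by (intro weight_F_comparable) auto
    also have "\<dots> \<le> K * (K * power_log_weight a b (R A))"
      using weight_F_R_comparable(1)[OF A(1)] K_pos by simp
    finally have "power_log_weight a b (F k) \<le> Y"
      by (simp add: Y_def r_eq A_def power2_eq_square mult.assoc)
    moreover have "1 / real k \<le> 1 / A" using k A by (simp add: frac_le)
    ultimately show ?thesis using A power_log_weight_nonneg by (intro mult_mono) auto
  qed
  have "(\<Sum>k\<in>{nat \<lceil>A\<rceil>..<nat \<lceil>B\<rceil>}. 1 / real k * power_log_weight a b (F k))
      \<le> real (card {nat \<lceil>A\<rceil>..<nat \<lceil>B\<rceil>}) * (1 / A * Y)"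
    by (rule sum_bounded_above) (rule summand_le)
  also have "\<dots> \<le> (exp 2 * A) * (1 / A * Y)"
    using card_block_le[OF j(1)] Y A by (intro mult_right_mono) (auto simp: A_def B_def)
  also have "\<dots> = exp 2 * Y" using A by simp
  finally show ?thesis by (simp add: A_def B_def Y_def mult.assoc)
qed

lemma block_sum_lower:
  fixes j :: nat
  assumes j: "s0 \<le> j" "1 + 2 powr (1/\<eta>) \<le> j" "2 / (1 - exp (- \<delta>)) \<le> j"
  shows "power_log_weight a b (r (real j + 1)) \<le> 2 * K\<^sup>2 / (1 - exp (- \<delta>)) *
    (\<Sum>k\<in>{nat \<lceil>T j\<rceil>..<nat \<lceil>T (real j + 1)\<rceil>}. 1 / real k * power_log_weight a b (F k))"
proof -
  define A B where "A = T j" and "B = T (real j + 1)"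
  define Y where "Y = power_log_weight a b (r (real j + 1)) / K\<^sup>2"
  have Y: "0 \<le> Y" using power_log_weight_nonneg by (simp add: Y_def)
  have A: "t0 \<le> A" "1 < A" using T_bounds(1)[OF j(1)] t0 by (auto simp: A_def)
  have B: "t0 \<le> B" "A \<le> B" using A T_mono[OF j(1), of "real j + 1"] by (auto simp: A_def B_def)
  have window: "B \<le> A * exp (ln A powr \<eta>)" using T_step_window[OF j(1,2)] by (simp add: A_def B_def)
  have summand_ge: "1 / B * Y \<le> 1 / real k * power_log_weight a b (F k)"
    if "k \<in> {nat \<lceil>A\<rceil>..<nat \<lceil>B\<rceil>}" for k
  proof -
    have k: "A \<le> real k" "real k < B" using that A mem_ceiling_interval_iff[of A] by auto
    have "power_log_weight a b (R B) \<le> K * power_log_weight a b (F B)"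
      by (rule weight_F_R_comparable(2)[OF B(1)])
    also have "\<dots> \<le> K * (K * power_log_weight a b (F k))"
      using A k K_pos F_le_on_window(2)[OF A(1) k(1) _ window] by (auto intro: weight_F_comparable)
    finally have "Y \<le> power_log_weight a b (F k)"
      using K_pos by (simp add: Y_def B_def r_eq divide_le_eq power2_eq_square mult.commute mult.left_commute)
    moreover have "1 / B \<le> 1 / real k" using k A by (simp add: frac_le)
    ultimately show ?thesis using A B Y by (intro mult_mono) auto
  qed
  have "(1 - exp (- \<delta>)) / 2 * Y = ((1 - exp (- \<delta>)) / 2 * B) * (1 / B * Y)" using A B by simp
  also have "\<dots> \<le> real (card {nat \<lceil>A\<rceil>..<nat \<lceil>B\<rceil>}) * (1 / B * Y)"
    using card_block_ge[OF j(1,3)] A B Y by (intro mult_right_mono) (auto simp: A_def B_def)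
  also have "\<dots> \<le> (\<Sum>k\<in>{nat \<lceil>A\<rceil>..<nat \<lceil>B\<rceil>}. 1 / real k * power_log_weight a b (F k))"
    by (rule sum_bounded_below) (rule summand_ge)
  finally show ?thesis
    using \<delta>_pos K_pos by (simp add: A_def B_def Y_def field_simps)
qed

end

lemma summable_F_weight_iff_summable_r_weight:
  fixes a b :: real
  assumes ab: "0 < a" "0 < b"
  shows "summable (\<lambda>k::nat. if t0 \<le> real k
            then (1 / real k) * F (real k) powr a * (ln (1 / F (real k))) powr b else 0)
    \<longleftrightarrow> summable (\<lambda>k::nat. if s0 \<le> real k
            then r (real k) powr a * (ln (1 / r (real k))) powr b else 0)"
    (is "summable ?u \<longleftrightarrow> summable ?v")
proof -
  have "1 \<le> max C d" using C by simp
  obtain K where K: "0 < K" and comparable: "\<And>x y. 0 < x \<Longrightarrow> x \<le> 1/2 \<Longrightarrow> 0 < y \<Longrightarrow> y \<le> 1/2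
      \<Longrightarrow> y \<le> max C d * x \<Longrightarrow> power_log_weight a b y \<le> K * power_log_weight a b x"
    using power_log_weight_comparable[OF ab \<open>1 \<le> max C d\<close>] by blast
  obtain J0 :: nat where J0: "max s0 (max (1 + 2 powr (1/\<eta>)) (2 / (1 - exp (- \<delta>)))) \<le> J0"
    using real_arch_simple by blast
  define N where "N j = nat \<lceil>T (real j)\<rceil>" for j
  have N_Suc: "N (Suc j) = nat \<lceil>T (real j + 1)\<rceil>" for j by (simp add: N_def add.commute)
  have block_eq: "sum ?u {N j..<N (Suc j)} =
      (\<Sum>k\<in>{nat \<lceil>T j\<rceil>..<nat \<lceil>T (real j + 1)\<rceil>}. 1 / real k * power_log_weight a b (F k))"
    if "J0 \<le> j" for j
  proof (unfold N_Suc, intro sum.cong)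
    fix k assume "k \<in> {nat \<lceil>T j\<rceil>..<nat \<lceil>T (real j + 1)\<rceil>}"
    moreover have "t0 \<le> T j" using that J0 by (intro T_bounds) simp
    ultimately have "t0 \<le> real k" using mem_ceiling_interval_iff[of "T j"] t0 by force
    then show "?u k = 1 / real k * power_log_weight a b (F k)"
      by (simp add: power_log_weight_def mult.assoc)
  qed (simp add: N_def)
  have v_eq: "?v j = power_log_weight a b (r j)" "?v (Suc j) = power_log_weight a b (r (real j + 1))"
    if "J0 \<le> j" for j
    using that J0 by (auto simp: power_log_weight_def add.commute)
  show ?thesis
  proof (rule summable_iff_summable_blocks)
    show "0 \<le> ?u k" "0 \<le> ?v k" for k by simp_all
    have "s0 \<le> real J0" using J0 by simp
    from nat_ceiling_T_blocks[OF this]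
    show "J0 \<le> j \<Longrightarrow> N j \<le> N (Suc j)" "M \<le> N (J0 + M)" for j M by (simp_all add: N_def)
    show "sum ?u {N j..<N (Suc j)} \<le> exp 2 * K\<^sup>2 * ?v j" if "J0 \<le> j" for j
    proof -
      have "s0 \<le> real j" "1 + 2 powr (1/\<eta>) \<le> real j" using that J0 by auto
      from block_sum_upper[OF K comparable this] show ?thesis
        unfolding block_eq[OF that] v_eq[OF that] .
    qed
    show "?v (Suc j) \<le> 2 * K\<^sup>2 / (1 - exp (- \<delta>)) * sum ?u {N j..<N (Suc j)}" if "J0 \<le> j" for j
    proof -
      have "s0 \<le> real j" "1 + 2 powr (1/\<eta>) \<le> real j" "2 / (1 - exp (- \<delta>)) \<le> real j"
        using that J0 by auto
      from block_sum_lower[OF K comparable this] show ?thesis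
        unfolding block_eq[OF that] v_eq[OF that] .
    qed
    show "0 \<le> exp 2 * K\<^sup>2" "0 \<le> 2 * K\<^sup>2 / (1 - exp (- \<delta>))" using \<delta>_pos by simp_all
  qed
qed

end

lemma omega1_ge:
  "real CARD('m) * \<alpha> $ i \<le> omega1 \<alpha> \<beta>" "real CARD('n) * \<beta> $ j \<le> omega1 \<alpha> \<beta>"
  for \<alpha> :: "real^'m::finite" and \<beta> :: "real^'n::finite"
  unfolding omega1_def by (rule Max_ge; auto)+

lemma omega2_le:
  "omega2 \<alpha> \<beta> \<le> real CARD('m) * \<alpha> $ i" "omega2 \<alpha> \<beta> \<le> real CARD('n) * \<beta> $ j"
  for \<alpha> :: "real^'m::finite" and \<beta> :: "real^'n::finite"
  unfolding omega2_def by (rule Min_le; auto)+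

lemma psi_Dirichlet_if_eventually_less_Delta:
  fixes \<alpha> :: "real^'m::finite" and \<beta> :: "real^'n::finite" and A :: "real^'n^'m"
  assumes "dirichlet_function CARD('m) CARD('n) \<psi> t0 C \<eta>"
    and \<alpha>_pos: "\<forall>i. 0 < \<alpha> $ i" and \<beta>_pos: "\<forall>j. 0 < \<beta> $ j"
    and "\<forall>\<^sub>F s in at_top. omega1 \<alpha> \<beta> * r_fun CARD('m) CARD('n) \<psi> t0 s < Delta (gflow \<alpha> \<beta> s ` Lambda A)"
  shows "psi_Dirichlet \<alpha> \<beta> \<psi> A"
proof -
  interpret dirichlet_function "CARD('m)" "CARD('n)" \<psi> t0 C \<eta> by fact
  obtain s1 where s1: "\<And>s. s1 \<le> s \<Longrightarrow> omega1 \<alpha> \<beta> * r s < Delta (gflow \<alpha> \<beta> s ` Lambda A)"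
    using assms(4) by (auto simp: eventually_at_top_linorder)
  show ?thesis
    unfolding psi_Dirichlet_def eventually_at_top_linorder
  proof (intro exI[of _ "max t0 (exp (max s1 0))"] allI impI)
    fix t assume t: "max t0 (exp (max s1 0)) \<le> t"
    then have "t0 \<le> t" by simp
    have "max s1 0 \<le> ln t" using t t0 by (subst ln_ge_iff) auto
    then have s: "s1 \<le> S t" "0 \<le> S t" using S_bounds(1)[OF \<open>t0 \<le> t\<close>] by auto
    have "omega1 \<alpha> \<beta> * R t < Delta (gflow \<alpha> \<beta> (S t) ` Lambda A)"
      using s1[OF s(1)] by (simp add: r_eq T_S[OF \<open>t0 \<le> t\<close>])
    from Dirichlet_solution_if_less_Delta[OF \<alpha>_pos \<beta>_pos omega1_ge _ s(2) this]
    show "\<exists>p q. p \<in> integer_vectors \<and> q \<in> integer_vectors \<and> q \<noteq> 0 \<and>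
        qnorm \<alpha> (A *v q - p) < \<psi> t \<and> qnorm \<beta> q < t"
      using R_bounds(3)[OF \<open>t0 \<le> t\<close>] by (simp add: exp_S_minus_R[OF \<open>t0 \<le> t\<close>])
  qed
qed

lemma not_psi_Dirichlet_if_frequently_Delta_le:
  fixes \<alpha> :: "real^'m::finite" and \<beta> :: "real^'n::finite" and A :: "real^'n^'m"
  assumes "dirichlet_function CARD('m) CARD('n) \<psi> t0 C \<eta>"
    and \<alpha>_pos: "\<forall>i. 0 < \<alpha> $ i" and \<beta>_pos: "\<forall>j. 0 < \<beta> $ j"
    and frequently: "\<forall>s'. \<exists>s\<ge>s'. Delta (gflow \<alpha> \<beta> s ` Lambda A) \<le> omega2 \<alpha> \<beta> * r_fun CARD('m) CARD('n) \<psi> t0 s"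
  shows "\<not> psi_Dirichlet \<alpha> \<beta> \<psi> A"
proof
  interpret dirichlet_function "CARD('m)" "CARD('n)" \<psi> t0 C \<eta> by fact
  assume "psi_Dirichlet \<alpha> \<beta> \<psi> A"
  then obtain t1 where t1: "\<And>t. t1 \<le> t \<Longrightarrow> \<exists>p q. p \<in> integer_vectors \<and> q \<in> integer_vectors \<and> q \<noteq> 0 \<and>
      qnorm \<alpha> (A *v q - p) < \<psi> t \<and> qnorm \<beta> q < t"
    unfolding psi_Dirichlet_def eventually_at_top_linorder by blast
  obtain s where s: "S (max t1 t0) \<le> s" and Delta: "Delta (gflow \<alpha> \<beta> s ` Lambda A) \<le> omega2 \<alpha> \<beta> * r s"
    using frequently by blast
  have "s0 \<le> s" using s S_strict_mono strict_mono_on_leD[of "{t0..}" S t0 "max t1 t0"] by force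
  then have t: "t0 \<le> T s" "S (T s) = s" by (rule T_bounds)+
  have "max t1 t0 \<le> T s" using S_less_iff[of "T s" "max t1 t0"] s t by force
  then obtain p q where pq: "p \<in> integer_vectors" "q \<in> integer_vectors" "q \<noteq> 0"
    "qnorm \<alpha> (A *v q - p) < exp (- s - real CARD('m) * R (T s))"
    "qnorm \<beta> q < exp (s - real CARD('n) * R (T s))"
    using t1[of "T s"] exp_S_minus_R[OF t(1)] t(2) by auto
  have "omega2 \<alpha> \<beta> * R (T s) < Delta (gflow \<alpha> \<beta> s ` Lambda A)"
    using R_bounds(3)[OF t(1)] by (intro less_Delta_if_Dirichlet_solution[OF \<alpha>_pos \<beta>_pos omega2_le _ pq]) auto
  then show False using Delta by (simp add: r_eq)
qed

theorem proposition3p4: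
  fixes \<alpha> :: "real^'m::finite" and \<beta> :: "real^'n::finite"
    and \<psi> :: "real \<Rightarrow> real" and t0 C\<^sub>\<psi> \<eta> :: real
  assumes alpha_pos: "\<forall>i. \<alpha> $ i > 0" and alpha_sum: "(\<Sum>i\<in>UNIV. \<alpha> $ i) = 1"
    and beta_pos: "\<forall>j. \<beta> $ j > 0" and beta_sum: "(\<Sum>j\<in>UNIV. \<beta> $ j) = 1"
    and t0: "t0 > 1"
    and psi_cont: "continuous_on {t0..} \<psi>"
    and psi_decr: "\<forall>x y. t0 \<le> x \<longrightarrow> x \<le> y \<longrightarrow> \<psi> y \<le> \<psi> x"
    and psi_bounds: "\<forall>t\<ge>t0. 1 / (2 * t) \<le> \<psi> t \<and> \<psi> t < 1 / t"
    and C_psi: "C\<^sub>\<psi> \<ge> 1" and eta: "0 < \<eta>" "\<eta> < 1"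
    and F_doubling: "\<forall>t1 t2. t0 \<le> t1 \<longrightarrow> t1 \<le> t2 \<longrightarrow> t2 \<le> t1 * exp ((ln t1) powr \<eta>)
                        \<longrightarrow> Fpsi \<psi> t2 \<le> C\<^sub>\<psi> * Fpsi \<psi> t1"
  defines "s0 \<equiv> s_of CARD('m) CARD('n) \<psi> t0"
    and "r \<equiv> r_fun CARD('m) CARD('n) \<psi> t0"
    and "d \<equiv> real (CARD('m) + CARD('n))"
  shows "(\<forall>s\<ge>s0. \<exists>!t. t0 \<le> t \<and> s = s_of CARD('m) CARD('n) \<psi> t)
    \<and> continuous_on {s0..} r
    \<and> (\<forall>s\<ge>s0. 0 < r s \<and> r s < 1 / d)
    \<and> (\<exists>C\<^sub>r\<ge>1. \<exists>s_star\<ge>s0. \<forall>s1 s2. s_star \<le> s1 \<longrightarrow> s1 \<le> s2 \<longrightarrow> s2 \<le> s1 + s1 powr \<eta>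
          \<longrightarrow> r s2 \<le> C\<^sub>r * r s1)
    \<and> (\<forall>a b::real. a > 0 \<longrightarrow> b > 0 \<longrightarrow>
         (\<not> summable (\<lambda>k::nat. if t0 \<le> real k
              then (1 / real k) * Fpsi \<psi> (real k) powr a * (ln (1 / Fpsi \<psi> (real k))) powr b else 0)
          \<longleftrightarrow> \<not> summable (\<lambda>k::nat. if s0 \<le> real k
              then r (real k) powr a * (ln (1 / r (real k))) powr b else 0)))
    \<and> (\<forall>A :: real^'n^'m.
         ((\<forall>\<^sub>F s in at_top. Delta (gflow \<alpha> \<beta> s ` Lambda A) > omega1 \<alpha> \<beta> * r s)
             \<longrightarrow> psi_Dirichlet \<alpha> \<beta> \<psi> A)
       \<and> ((\<forall>S. \<exists>s\<ge>S. Delta (gflow \<alpha> \<beta> s ` Lambda A) \<le> omega2 \<alpha> \<beta> * r s)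
             \<longrightarrow> \<not> psi_Dirichlet \<alpha> \<beta> \<psi> A))"
proof -
  have dirichlet: "dirichlet_function CARD('m) CARD('n) \<psi> t0 C\<^sub>\<psi> \<eta>"
    using t0 psi_cont psi_decr psi_bounds C_psi eta F_doubling by unfold_locales simp_all
  interpret P: dirichlet_function "CARD('m)" "CARD('n)" \<psi> t0 "C\<^sub>\<psi>" \<eta> by (fact dirichlet)
  have "d = P.d" by (simp add: d_def P.d_def)
  show ?thesis
    unfolding s0_def r_def \<open>d = P.d\<close>
  proof (intro conjI allI impI)
    show "\<exists>!t. t0 \<le> t \<and> s = P.S t" if "P.s0 \<le> s" for s using that by (rule P.ex1_S_eq)
    show "continuous_on {P.s0..} P.r" by (rule P.r_continuous)
    show "0 < P.r s" "P.r s < 1 / P.d" if "P.s0 \<le> s" for s using P.r_bounds[OF that] by simp_all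
    show "\<exists>C\<^sub>r\<ge>1. \<exists>s_star\<ge>P.s0. \<forall>s1 s2. s_star \<le> s1 \<longrightarrow> s1 \<le> s2 \<longrightarrow> s2 \<le> s1 + s1 powr \<eta>
      \<longrightarrow> P.r s2 \<le> C\<^sub>r * P.r s1" by (rule P.r_doubling)
  qed (use P.summable_F_weight_iff_summable_r_weight
        psi_Dirichlet_if_eventually_less_Delta[OF dirichlet alpha_pos beta_pos]
        not_psi_Dirichlet_if_frequently_Delta_le[OF dirichlet alpha_pos beta_pos] in auto)
qed

end
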